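(* Let $\overline{G}_n=\overline{H}_0\overline{H}_1\cdots\overline{H}_{n-1}$ be a polyphenyl hexagonal chain with $n$ hexagons and let $t_k$ be the tail vertex (in $\overline{H}_{k-1}$) of the cut-edge attaching $\overline{H}_k$, $1\le k\le n-1$. Then $$W(\overline{G}_n)=6\sum_{k=1}^{n-1}\sum_{i=1}^{k}g(t_i)+45n^2-18n=6\sum_{k=1}^{n-1}(n-k)g(t_k)+45n^2-18n,$$ where $g(t_1)=9$ and, for $k\ge2$, $g(t_k)=12(k-1)+9$ if $t_k$ is $o_{k-1}$, $g(t_k)=18(k-1)+9$ if $t_k$ is $m_{k-1}$, and $g(t_k)=24(k-1)+9$ if $t_k$ is $p_{k-1}$.
   Context: All graphs are simple and connected; the Wiener index is $W(G)=\sum_{\{u,v\}\subseteq V(G)}d_G(u,v)$ with $d_G$ the shortest-path distance. A polyphenyl hexagonal chain $\overline{G}_n=\overline{H}_0\overline{H}_1\cdots\overline{H}_{n-1}$ of length $n$ consists of pairwise vertex-disjoint hexagons (6-cycles) $\overline{H}_0,\dots,\overline{H}_{n-1}$ together with cut-edges: $\overline{G}_1=\overline{H}_0$, and for $k\ge1$, $\overline{G}_{k+1}$ is obtained from $\overline{G}_k$ by adding $\overline{H}_k$ and a cut-edge joining a vertex $c_k$ of $\overline{H}_k$ to a vertex $t_k$ of $\overline{H}_{k-1}$ (the tail), where for $k\ge2$, $t_k\ne c_{k-1}$. For $k\ge1$, a vertex of $\overline{H}_k$ at distance $1$, $2$, $3$ from $c_k$ is an ortho-, meta-, para-vertex of $\overline{H}_k$,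 denoted $o_k,m_k,p_k$; thus for $k\ge2$, $t_k$ is one of $o_{k-1},m_{k-1},p_{k-1}$. *)

theory Defs
  imports Main
begin

text \<open>A graph is given by a vertex set V and a symmetric edge relation E
  (edges only between vertices of V).\<close>

definition walk_betw :: "('a \<Rightarrow> 'a \<Rightarrow> bool) \<Rightarrow> 'a \<Rightarrow> 'a list \<Rightarrow> 'a \<Rightarrow> bool" where
  "walk_betw E u p v \<longleftrightarrow> p \<noteq> [] \<and> hd p = u \<and> last p = v \<and>
     (\<forall>i. Suc i < length p \<longrightarrow> E (p ! i) (p ! Suc i))"

definition gdist :: "('a \<Rightarrow> 'a \<Rightarrow> bool) \<Rightarrow> 'a \<Rightarrow> 'a \<Rightarrow> nat" where
  "gdist E u v = (LEAST k. \<exists>p. walk_betw E u p v \<and> length p = Suc k)"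

definition wiener :: "'a set \<Rightarrow> ('a \<Rightarrow> 'a \<Rightarrow> bool) \<Rightarrow> nat" where
  "wiener V E = (\<Sum>(u, v) \<in> {(u, v). u \<in> V \<and> v \<in> V \<and> u \<noteq> v}. gdist E u v) div 2"

text \<open>Vertex (k, j): the vertex at cyclic position j (0..5) of hexagon H_k.
  c k: position of c_k in H_k; t k: position of the tail t_k in H_(k-1) (k \<ge> 1).\<close>

definition pc_verts :: "nat \<Rightarrow> (nat \<times> nat) set" where
  "pc_verts n = {(k, j). k < n \<and> j < 6}"

definition pc_edge :: "nat \<Rightarrow> (nat \<Rightarrow> nat) \<Rightarrow> (nat \<Rightarrow> nat) \<Rightarrow> nat \<times> nat \<Rightarrow> nat \<times> nat \<Rightarrow> bool" where
  "pc_edge n c t u v \<longleftrightarrow> u \<in> pc_verts n \<and> v \<in> pc_verts n \<and>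
     ((fst u = fst v \<and> (snd v = (snd u + 1) mod 6 \<or> snd u = (snd v + 1) mod 6))
      \<or> (\<exists>k. 1 \<le> k \<and> k < n \<and>
            ((u = (k, c k) \<and> v = (k - 1, t k)) \<or> (v = (k, c k) \<and> u = (k - 1, t k)))))"

definition pc_valid :: "nat \<Rightarrow> (nat \<Rightarrow> nat) \<Rightarrow> (nat \<Rightarrow> nat) \<Rightarrow> bool" where
  "pc_valid n c t \<longleftrightarrow> (\<forall>k. 1 \<le> k \<and> k < n \<longrightarrow> c k < 6 \<and> t k < 6) \<and>
     (\<forall>k. 2 \<le> k \<and> k < n \<longrightarrow> t k \<noteq> c (k - 1))"

definition hex_dist :: "nat \<Rightarrow> nat \<Rightarrow> nat" where
  "hex_dist a b = min ((a + 6 - b) mod 6) ((b + 6 - a) mod 6)"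

definition is_ortho :: "(nat \<Rightarrow> nat) \<Rightarrow> (nat \<Rightarrow> nat) \<Rightarrow> nat \<Rightarrow> bool" where
  "is_ortho c t k \<longleftrightarrow> hex_dist (c (k - 1)) (t k) = 1"
definition is_meta :: "(nat \<Rightarrow> nat) \<Rightarrow> (nat \<Rightarrow> nat) \<Rightarrow> nat \<Rightarrow> bool" where
  "is_meta c t k \<longleftrightarrow> hex_dist (c (k - 1)) (t k) = 2"
definition is_para :: "(nat \<Rightarrow> nat) \<Rightarrow> (nat \<Rightarrow> nat) \<Rightarrow> nat \<Rightarrow> bool" where
  "is_para c t k \<longleftrightarrow> hex_dist (c (k - 1)) (t k) = 3"

definition gt :: "(nat \<Rightarrow> nat) \<Rightarrow> (nat \<Rightarrow> nat) \<Rightarrow> nat \<Rightarrow> nat" where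
  "gt c t k = (if k = 1 then 9
     else if is_ortho c t k then 12 * (k - 1) + 9
     else if is_meta c t k then 18 * (k - 1) + 9
     else if is_para c t k then 24 * (k - 1) + 9
     else 0)"

end

theory Submission
  imports Defs
begin

text \<open>
  The distance between two vertices of the chain is explicit: inside one hexagon it is the
  distance on the 6-cycle, and a shortest path between hexagons \<open>H\<^sub>a\<close> and \<open>H\<^sub>b\<close>
  (\<open>a < b\<close>) must use the cut edges \<open>t\<^sub>k c\<^sub>k\<close> for \<open>a < k \<le> b\<close>, so it is the sum of the
  cycle distances between consecutive attachment vertices plus \<open>b - a\<close>. Summing this formula
  hexagon by hexagon, the distance sum of \<open>G\<^sub>m\<^sub>+\<^sub>1\<close> exceeds that of \<open>G\<^sub>m\<close> by twelve times the
  transmission of \<open>t\<^sub>m\<close> in \<open>G\<^sub>m\<close> plus a term linear in \<open>m\<close>. In turn the transmission of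
  \<open>t\<^sub>m\<^sub>+\<^sub>1\<close> in \<open>G\<^sub>m\<^sub>+\<^sub>1\<close> exceeds that of \<open>t\<^sub>m\<close> in \<open>G\<^sub>m\<close> by exactly \<open>g(t\<^sub>m\<^sub>+\<^sub>1)\<close>, the
  ortho/meta/para case being the cycle distance 1, 2, 3 between \<open>c\<^sub>m\<close> and \<open>t\<^sub>m\<^sub>+\<^sub>1\<close>.
\<close>

section \<open>Distances on the hexagon\<close>

text \<open>The finite checks quantify over \<open>set [0..<6]\<close> rather than \<open>x < 6\<close>: only the former is
  evaluated efficiently by \<open>code_simp\<close>.\<close>

lemma hex_dist_triangle:
  assumes "x < 6" "y < 6" "z < 6"
  shows "hex_dist x z \<le> hex_dist x y + hex_dist y z"
proof -
  have "\<forall>x\<in>set [0..<6]. \<forall>y\<in>set [0..<6]. \<forall>z\<in>set [0..<6].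
          hex_dist x z \<le> hex_dist x y + hex_dist y z"
    unfolding hex_dist_def by code_simp
  then show ?thesis using assms by auto
qed

lemma hex_dist_self [simp]: "hex_dist x x = 0"
  by (simp add: hex_dist_def)

lemma hex_dist_sym: "hex_dist x y = hex_dist y x"
  unfolding hex_dist_def by (rule min.commute)

lemma hex_dist_eq_0_iff:
  assumes "x < 6" "y < 6"
  shows "hex_dist x y = 0 \<longleftrightarrow> x = y"
proof -
  have "\<forall>x\<in>set [0..<6]. \<forall>y\<in>set [0..<6]. hex_dist x y = 0 \<longleftrightarrow> x = y"
    unfolding hex_dist_def by code_simp
  then show ?thesis using assms by auto
qed

lemma hex_dist_cases:
  assumes "x < 6" "y < 6" "x \<noteq> y"
  shows "hex_dist x y \<in> {1, 2, 3}"
proof -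
  have "\<forall>x\<in>set [0..<6]. \<forall>y\<in>set [0..<6]. x \<noteq> y \<longrightarrow> hex_dist x y \<in> {1, 2, 3}"
    unfolding hex_dist_def by code_simp
  then show ?thesis using assms by auto
qed

lemma hex_dist_adjacent:
  assumes "x < 6" "y < 6" "y = (x + 1) mod 6 \<or> x = (y + 1) mod 6"
  shows "hex_dist x y \<le> 1"
proof -
  have "\<forall>x\<in>set [0..<6]. \<forall>y\<in>set [0..<6].
          y = (x + 1) mod 6 \<or> x = (y + 1) mod 6 \<longrightarrow> hex_dist x y \<le> 1"
    unfolding hex_dist_def by code_simp
  then show ?thesis using assms by (metis atLeastLessThan_iff set_upt zero_le)
qed

lemma hex_dist_step:
  assumes "x < 6" "y < 6" "x \<noteq> y"
  obtains x' where "x' < 6" "x' = (x + 1) mod 6 \<or> x = (x' + 1) mod 6"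
    and "hex_dist x' y + 1 = hex_dist x y"
proof -
  have "\<forall>x\<in>set [0..<6]. \<forall>y\<in>set [0..<6]. x \<noteq> y \<longrightarrow>
          (\<exists>x'\<in>set [0..<6]. (x' = (x + 1) mod 6 \<or> x = (x' + 1) mod 6)
             \<and> hex_dist x' y + 1 = hex_dist x y)"
    unfolding hex_dist_def by code_simp
  then show ?thesis using assms that by (metis atLeastLessThan_iff set_upt zero_le)
qed

lemma hex_dist_sum:
  assumes "x < 6"
  shows "(\<Sum>y<6. hex_dist x y) = 9"
proof -
  have "\<forall>x\<in>set [0..<6]. hex_dist x 0 + hex_dist x 1 + hex_dist x 2 + hex_dist x 3
          + hex_dist x 4 + hex_dist x 5 = 9"
    unfolding hex_dist_def by code_simp
  moreover have "(\<Sum>y<6. hex_dist x y) = hex_dist x 0 + hex_dist x 1 + hex_dist x 2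
                   + hex_dist x 3 + hex_dist x 4 + hex_dist x 5"
    by (simp add: numeral_eq_Suc lessThan_Suc)
  ultimately show ?thesis using assms by auto
qed

text \<open>Positions reduced mod 6 make the distance formula below total, so that its algebraic
  properties need no validity hypotheses on \<open>c\<close> and \<open>t\<close>.\<close>

definition cyc_dist :: "nat \<Rightarrow> nat \<Rightarrow> nat" where
  "cyc_dist x y = hex_dist (x mod 6) (y mod 6)"

lemma cyc_dist_eq_hex_dist: "x < 6 \<Longrightarrow> y < 6 \<Longrightarrow> cyc_dist x y = hex_dist x y"
  by (simp add: cyc_dist_def)

lemma cyc_dist_self [simp]: "cyc_dist x x = 0"
  by (simp add: cyc_dist_def)

lemma cyc_dist_sym: "cyc_dist x y = cyc_dist y x"
  unfolding cyc_dist_def by (simp add: hex_dist_sym)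

lemma cyc_dist_triangle: "cyc_dist x z \<le> cyc_dist x y + cyc_dist y z"
  unfolding cyc_dist_def by (rule hex_dist_triangle) auto

lemma cyc_dist_sum: "(\<Sum>y<6. cyc_dist x y) = 9"
proof -
  have "(\<Sum>y<6. cyc_dist x y) = (\<Sum>y<6. hex_dist (x mod 6) y)"
    by (rule sum.cong) (auto simp: cyc_dist_def)
  then show ?thesis using hex_dist_sum[of "x mod 6"] by simp
qed

lemma cyc_dist_sum': "(\<Sum>x<6. cyc_dist x y) = 9"
  using cyc_dist_sum[of y] by (simp add: cyc_dist_sym)

section \<open>Walks and distances in arbitrary graphs\<close>

lemma walk_betw_singleton: "walk_betw E u [x] v \<longleftrightarrow> x = u \<and> u = v"
  by (auto simp: walk_betw_def)

lemma walk_betw_Cons_Cons: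
  "walk_betw E u (x # y # p) v \<longleftrightarrow> x = u \<and> E u y \<and> walk_betw E y (y # p) v"
proof -
  have "(\<forall>i. Suc i < length (x # y # p) \<longrightarrow> E ((x # y # p) ! i) ((x # y # p) ! Suc i))
        \<longleftrightarrow> E x y \<and> (\<forall>i. Suc i < length (y # p) \<longrightarrow> E ((y # p) ! i) ((y # p) ! Suc i))"
    by (auto simp: less_Suc_eq_0_disj)
  then show ?thesis by (auto simp: walk_betw_def)
qed

lemma walk_betw_ConsI:
  assumes "E u w" "walk_betw E w p v"
  shows "walk_betw E u (u # p) v"
proof (cases p)
  case Nil
  with assms(2) show ?thesis by (simp add: walk_betw_def)
next
  case (Cons x p')
  with assms have "x = w" by (simp add: walk_betw_def)
  with assms Cons show ?thesis by (simp add: walk_betw_Cons_Cons)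
qed

lemma walk_betw_append:
  assumes "walk_betw E u p w" "walk_betw E w (w # q) v"
  shows "walk_betw E u (p @ q) v"
  using assms
proof (induction p arbitrary: u)
  case Nil
  then show ?case by (simp add: walk_betw_def)
next
  case (Cons x p)
  show ?case
  proof (cases p)
    case Nil
    with Cons.prems show ?thesis by (cases q) (auto simp: walk_betw_singleton walk_betw_Cons_Cons)
  next
    case (Cons y p')
    with Cons.prems Cons.IH[of y] show ?thesis by (auto simp: walk_betw_Cons_Cons)
  qed
qed

lemma walk_betw_rev:
  assumes "\<And>a b. E a b \<Longrightarrow> E b a" "walk_betw E u p v"
  shows "walk_betw E v (rev p) u"
  unfolding walk_betw_def
proof (intro conjI allI impI)
  show "rev p \<noteq> []" "hd (rev p) = v" "last (rev p) = u"
    using assms(2) by (auto simp: walk_betw_def hd_rev last_rev)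
  fix i assume i: "Suc i < length (rev p)"
  then have "E (p ! (length p - Suc (Suc i))) (p ! Suc (length p - Suc (Suc i)))"
    using assms(2) unfolding walk_betw_def by simp
  then show "E (rev p ! i) (rev p ! Suc i)"
    using i assms(1) by (simp add: rev_nth Suc_diff_Suc)
qed

lemma walk_betw_length_ge:
  assumes "\<And>a b. E a b \<Longrightarrow> f a \<le> f b + 1" "f v = (0::nat)" "walk_betw E u p v"
  shows "f u < length p"
  using assms(3)
proof (induction p arbitrary: u)
  case Nil
  then show ?case by (simp add: walk_betw_def)
next
  case (Cons x p)
  show ?case
  proof (cases p)
    case Nil
    with Cons.prems assms(2) show ?thesis by (simp add: walk_betw_singleton)
  next
    case (Cons y p')
    with Cons.prems Cons.IH[of y] assms(1)[of u y] show ?thesis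
      by (auto simp: walk_betw_Cons_Cons)
  qed
qed

lemma gdist_eqI:
  assumes "\<And>a b. E a b \<Longrightarrow> f a \<le> f b + 1" "f v = (0::nat)"
    and "walk_betw E u p v" "length p = Suc (f u)"
  shows "gdist E u v = f u"
  unfolding gdist_def
proof (rule Least_equality)
  show "\<exists>p. walk_betw E u p v \<and> length p = Suc (f u)"
    using assms(3,4) by blast
next
  fix k assume "\<exists>p. walk_betw E u p v \<and> length p = Suc k"
  then show "f u \<le> k"
    using walk_betw_length_ge[where E = E and f = f, OF assms(1,2)] by fastforce
qed

section \<open>The distance formula for polyphenyl chains\<close>

text \<open>\<open>chain_len c t a x d y\<close> is the distance from vertex \<open>x\<close> of \<open>H\<^sub>a\<close> to vertex \<open>y\<close> of
  \<open>H\<^sub>a\<^sub>+\<^sub>d\<close>: the path crosses the cut edges \<open>t\<^sub>k c\<^sub>k\<close> for \<open>a < k \<le> a + d\<close> in turn.\<close>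

primrec chain_len :: "(nat \<Rightarrow> nat) \<Rightarrow> (nat \<Rightarrow> nat) \<Rightarrow> nat \<Rightarrow> nat \<Rightarrow> nat \<Rightarrow> nat \<Rightarrow> nat" where
  "chain_len c t a x 0 y = cyc_dist x y"
| "chain_len c t a x (Suc d) y =
     chain_len c t a x d (t (a + Suc d)) + 1 + cyc_dist (c (a + Suc d)) y"

definition pc_dist :: "(nat \<Rightarrow> nat) \<Rightarrow> (nat \<Rightarrow> nat) \<Rightarrow> nat \<times> nat \<Rightarrow> nat \<times> nat \<Rightarrow> nat" where
  "pc_dist c t u v =
     (if fst u \<le> fst v then chain_len c t (fst u) (snd u) (fst v - fst u) (snd v)
      else chain_len c t (fst v) (snd v) (fst u - fst v) (snd u))"

lemma chain_len_Suc_first: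
  "chain_len c t a x (Suc d) y = cyc_dist x (t (Suc a)) + 1 + chain_len c t (Suc a) (c (Suc a)) d y"
  by (induction d arbitrary: y) auto

lemma chain_len_triangle_last: "chain_len c t a x d y \<le> chain_len c t a x d y' + cyc_dist y' y"
  by (cases d) (use cyc_dist_triangle in \<open>auto intro: order_trans\<close>)

lemma chain_len_triangle_first: "chain_len c t a x d y \<le> chain_len c t a x' d y + cyc_dist x x'"
  by (induction d arbitrary: y) (use cyc_dist_triangle in \<open>auto simp: cyc_dist_sym\<close>)

lemma pc_dist_self [simp]: "pc_dist c t v v = 0"
  by (simp add: pc_dist_def)

lemma pc_dist_sym: "pc_dist c t u v = pc_dist c t v u"
  by (auto simp: pc_dist_def cyc_dist_sym)

lemma pc_dist_same_hexagon:
  assumes "fst u = fst w"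
  shows "pc_dist c t u v \<le> pc_dist c t w v + cyc_dist (snd u) (snd w)"
  using assms chain_len_triangle_first chain_len_triangle_last
  by (auto simp: pc_dist_def cyc_dist_sym)

lemma pc_dist_extend:
  assumes "a < m"
  shows "pc_dist c t (a, x) (m, y) = pc_dist c t (a, x) (m - 1, t m) + 1 + cyc_dist (c m) y"
proof -
  have "m - a = Suc (m - 1 - a)" "a + Suc (m - 1 - a) = m" "a \<le> m - 1" using assms by auto
  then show ?thesis using assms by (simp add: pc_dist_def)
qed

lemma pc_dist_cut_edge:
  assumes "1 \<le> k"
  shows "k \<le> fst v \<Longrightarrow> pc_dist c t (k - 1, t k) v = pc_dist c t (k, c k) v + 1"
    and "fst v < k \<Longrightarrow> pc_dist c t (k, c k) v = pc_dist c t (k - 1, t k) v + 1"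
proof -
  obtain b y where v: "v = (b, y)" by (cases v)
  assume "k \<le> fst v"
  then have "b - (k - 1) = Suc (b - k)" "Suc (k - 1) = k" using assms v by auto
  then show "pc_dist c t (k - 1, t k) v = pc_dist c t (k, c k) v + 1"
    using \<open>k \<le> fst v\<close> v by (simp add: pc_dist_def chain_len_Suc_first del: chain_len.simps(2))
next
  assume "fst v < k"
  then show "pc_dist c t (k, c k) v = pc_dist c t (k - 1, t k) v + 1"
    using pc_dist_extend[of "fst v" k c t "snd v" "c k"] by (simp add: pc_dist_sym)
qed

lemma pc_dist_edge_le:
  assumes "pc_edge n c t u w"
  shows "pc_dist c t u v \<le> pc_dist c t w v + 1"
proof -
  have "u \<in> pc_verts n" "w \<in> pc_verts n"
    using assms unfolding pc_edge_def by blast+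
  then have positions: "snd u < 6" "snd w < 6"
    by (auto simp: pc_verts_def)
  from assms consider
    (hexagon) "fst u = fst w" "snd w = (snd u + 1) mod 6 \<or> snd u = (snd w + 1) mod 6"
  | (cut) k where "1 \<le> k" "(u = (k, c k) \<and> w = (k - 1, t k)) \<or> (w = (k, c k) \<and> u = (k - 1, t k))"
    unfolding pc_edge_def by blast
  then show ?thesis
  proof cases
    case hexagon
    then have "cyc_dist (snd u) (snd w) \<le> 1"
      using positions hex_dist_adjacent[of "snd u" "snd w"] by (simp add: cyc_dist_eq_hex_dist)
    with pc_dist_same_hexagon[OF hexagon(1), where c = c and t = t and v = v] show ?thesis
      by linarith
  next
    case cut
    show ?thesis
    proof (cases "k \<le> fst v")
      case True
      then show ?thesis
        using cut pc_dist_cut_edge(1)[OF cut(1), where c = c and t = t and v = v] by auto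
    next
      case False
      then show ?thesis
        using cut pc_dist_cut_edge(2)[OF cut(1), where c = c and t = t and v = v] by auto
    qed
  qed
qed

lemma pc_edge_sym: "pc_edge n c t u w \<Longrightarrow> pc_edge n c t w u"
  unfolding pc_edge_def by (elim conjE, intro conjI) (assumption | metis)+

lemma hexagon_walk:
  assumes "a < n" "x < 6" "y < 6"
  shows "\<exists>p. walk_betw (pc_edge n c t) (a, x) p (a, y) \<and> length p = Suc (hex_dist x y)"
  using assms(2)
proof (induction "hex_dist x y" arbitrary: x)
  case 0
  then have "x = y" using hex_dist_eq_0_iff assms(3) by metis
  then show ?case by (intro exI[of _ "[(a, x)]"]) (simp add: walk_betw_singleton)
next
  case (Suc m)
  then have "x \<noteq> y" using hex_dist_eq_0_iff assms(3) by fastforce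
  then obtain x' where x': "x' < 6" "x' = (x + 1) mod 6 \<or> x = (x' + 1) mod 6"
    and dist: "hex_dist x' y + 1 = hex_dist x y"
    using hex_dist_step Suc.prems assms(3) by blast
  moreover have "m = hex_dist x' y" using dist Suc.hyps(2) by simp
  ultimately obtain p where p: "walk_betw (pc_edge n c t) (a, x') p (a, y)" "length p = Suc m"
    using Suc.hyps(1) by blast
  have "pc_edge n c t (a, x) (a, x')"
    using assms(1) x' Suc.prems by (auto simp: pc_edge_def pc_verts_def)
  then have "walk_betw (pc_edge n c t) (a, x) ((a, x) # p) (a, y)"
    using p(1) by (rule walk_betw_ConsI)
  with p(2) Suc.hyps(2) show ?case by auto
qed

lemma chain_walk:
  assumes valid: "pc_valid n c t" and "a + d < n" "x < 6" "y < 6"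
  shows "\<exists>p. walk_betw (pc_edge n c t) (a, x) p (a + d, y) \<and> length p = Suc (chain_len c t a x d y)"
  using assms(2,4)
proof (induction d arbitrary: y)
  case 0
  then show ?case using hexagon_walk[of a n x y] assms(3) by (simp add: cyc_dist_eq_hex_dist)
next
  case (Suc d)
  let ?k = "a + Suc d"
  have ct: "c ?k < 6" "t ?k < 6" using valid Suc.prems(1) by (auto simp: pc_valid_def)
  obtain p where p: "walk_betw (pc_edge n c t) (a, x) p (a + d, t ?k)"
    "length p = Suc (chain_len c t a x d (t ?k))"
    using Suc.IH[of "t ?k"] Suc.prems ct by auto
  obtain q where q: "walk_betw (pc_edge n c t) (?k, c ?k) q (?k, y)"
    "length q = Suc (hex_dist (c ?k) y)"
    using hexagon_walk[of ?k n "c ?k" y] Suc.prems ct by auto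
  have "pc_edge n c t (a + d, t ?k) (?k, c ?k)"
    using Suc.prems ct unfolding pc_edge_def pc_verts_def by (auto intro!: exI[of _ ?k])
  then have "walk_betw (pc_edge n c t) (a + d, t ?k) ((a + d, t ?k) # q) (?k, y)"
    using q(1) by (rule walk_betw_ConsI)
  then have "walk_betw (pc_edge n c t) (a, x) (p @ q) (?k, y)"
    by (rule walk_betw_append[OF p(1)])
  moreover have "length (p @ q) = Suc (chain_len c t a x (Suc d) y)"
    using p(2) q(2) Suc.prems ct by (simp add: cyc_dist_eq_hex_dist)
  ultimately show ?case by auto
qed

lemma pc_dist_walk:
  assumes "pc_valid n c t" "u \<in> pc_verts n" "v \<in> pc_verts n"
  shows "\<exists>p. walk_betw (pc_edge n c t) u p v \<and> length p = Suc (pc_dist c t u v)"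
proof (cases "fst u \<le> fst v")
  case True
  then show ?thesis
    using chain_walk[OF assms(1), of "fst u" "fst v - fst u" "snd u" "snd v"] assms(2,3)
    by (auto simp: pc_dist_def pc_verts_def)
next
  case False
  then obtain p where "walk_betw (pc_edge n c t) v p u" "length p = Suc (pc_dist c t u v)"
    using chain_walk[OF assms(1), of "fst v" "fst u - fst v" "snd v" "snd u"] assms(2,3)
    by (auto simp: pc_dist_def pc_verts_def)
  then show ?thesis
    using walk_betw_rev[of "pc_edge n c t", OF pc_edge_sym] by (metis length_rev)
qed

lemma gdist_pc_edge:
  assumes "pc_valid n c t" "u \<in> pc_verts n" "v \<in> pc_verts n"
  shows "gdist (pc_edge n c t) u v = pc_dist c t u v"
proof -
  obtain p where "walk_betw (pc_edge n c t) u p v" "length p = Suc (pc_dist c t u v)"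
    using pc_dist_walk[OF assms] by blast
  moreover have "pc_dist c t a v \<le> pc_dist c t b v + 1" if "pc_edge n c t a b" for a b
    using that by (rule pc_dist_edge_le)
  ultimately show ?thesis
    by (intro gdist_eqI[where f = "\<lambda>w. pc_dist c t w v"]) auto
qed

section \<open>Summing the distances\<close>

lemma pc_verts_eq: "pc_verts n = {..<n} \<times> {..<6}"
  by (auto simp: pc_verts_def)

definition dist_sum :: "(nat \<Rightarrow> nat) \<Rightarrow> (nat \<Rightarrow> nat) \<Rightarrow> nat \<Rightarrow> nat" where
  "dist_sum c t m = (\<Sum>a<m. \<Sum>x<6. \<Sum>b<m. \<Sum>y<6. pc_dist c t (a, x) (b, y))"

definition tail_transmission :: "(nat \<Rightarrow> nat) \<Rightarrow> (nat \<Rightarrow> nat) \<Rightarrow> nat \<Rightarrow> nat" where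
  "tail_transmission c t m = (\<Sum>a<m. \<Sum>x<6. pc_dist c t (a, x) (m - 1, t m))"

lemma wiener_eq_dist_sum:
  assumes "pc_valid n c t"
  shows "wiener (pc_verts n) (pc_edge n c t) = dist_sum c t n div 2"
proof -
  let ?V = "pc_verts n"
  let ?P = "{(u, v). u \<in> ?V \<and> v \<in> ?V \<and> u \<noteq> v}"
  have "(\<Sum>(u, v)\<in>?P. gdist (pc_edge n c t) u v) = (\<Sum>(u, v)\<in>?P. pc_dist c t u v)"
    by (rule sum.cong) (auto simp: gdist_pc_edge[OF assms])
  also have "\<dots> = (\<Sum>(u, v)\<in>?V \<times> ?V. pc_dist c t u v)"
    by (rule sum.mono_neutral_left) (auto simp: pc_verts_eq)
  also have "\<dots> = (\<Sum>u\<in>?V. \<Sum>v\<in>?V. pc_dist c t u v)"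
    by (rule sum.cartesian_product[symmetric])
  also have "\<dots> = dist_sum c t n"
  proof -
    have "(\<Sum>u\<in>{..<n} \<times> {..<6}. g u) = (\<Sum>a<n. \<Sum>x<(6::nat). g (a, x))" for g :: "_ \<Rightarrow> nat"
      by (simp add: sum.cartesian_product)
    then show ?thesis unfolding dist_sum_def pc_verts_eq by presburger
  qed
  finally show ?thesis unfolding wiener_def by simp
qed

lemma tail_transmission_Suc:
  "tail_transmission c t (Suc m)
           = tail_transmission c t m + 6 * m * (1 + cyc_dist (c m) (t (Suc m))) + 9"
proof -
  let ?h = "cyc_dist (c m) (t (Suc m))"
  have "tail_transmission c t (Suc m)
          = (\<Sum>a<m. \<Sum>x<6. pc_dist c t (a, x) (m, t (Suc m)))
            + (\<Sum>x<6. pc_dist c t (m, x) (m, t (Suc m)))"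
    by (simp add: tail_transmission_def)
  also have "(\<Sum>x<6. pc_dist c t (m, x) (m, t (Suc m))) = 9"
    by (simp add: pc_dist_def cyc_dist_sum')
  also have "(\<Sum>a<m. \<Sum>x<6. pc_dist c t (a, x) (m, t (Suc m)))
               = (\<Sum>a<m. \<Sum>x<6. pc_dist c t (a, x) (m - 1, t m) + (1 + ?h))"
    by (intro sum.cong refl) (simp add: pc_dist_extend)
  also have "\<dots> = tail_transmission c t m + 6 * m * (1 + ?h)"
    by (simp only: sum.distrib sum_constant card_lessThan) (simp add: tail_transmission_def)
  finally show ?thesis by simp
qed

lemma dist_sum_Suc:
  "dist_sum c t (Suc m) = dist_sum c t m + 12 * tail_transmission c t m + 180 * m + 54"
proof -
  define C where "C = (\<Sum>a<m. \<Sum>x<6. \<Sum>y<6. pc_dist c t (a, x) (m, y))"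
  have C_swap: "(\<Sum>x<6. \<Sum>b<m. \<Sum>y<6. pc_dist c t (m, x) (b, y)) = C"
  proof -
    have "(\<Sum>x<6. \<Sum>b<m. \<Sum>y<6. pc_dist c t (m, x) (b, y))
            = (\<Sum>b<m. \<Sum>x<6. \<Sum>y<6. pc_dist c t (b, y) (m, x))"
      by (subst sum.swap) (simp add: pc_dist_sym)
    also have "\<dots> = C"
      unfolding C_def by (rule sum.cong[OF refl], rule sum.swap)
    finally show ?thesis .
  qed
  have "dist_sum c t (Suc m)
          = dist_sum c t m + C + (\<Sum>x<6. \<Sum>b<m. \<Sum>y<6. pc_dist c t (m, x) (b, y))
            + (\<Sum>x<6. \<Sum>y<6. pc_dist c t (m, x) (m, y))"
    by (simp add: dist_sum_def C_def sum.distrib)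
  also have "\<dots> = dist_sum c t m + 2 * C + 54"
    using C_swap by (simp add: pc_dist_def cyc_dist_sum)
  also have "C = (\<Sum>a<m. \<Sum>x<6. \<Sum>y<6. pc_dist c t (a, x) (m - 1, t m) + 1 + cyc_dist (c m) y)"
    unfolding C_def by (intro sum.cong refl) (simp add: pc_dist_extend)
  also have "\<dots> = (\<Sum>a<m. \<Sum>x<6. 6 * pc_dist c t (a, x) (m - 1, t m) + 15)"
    by (simp only: sum.distrib sum_constant card_lessThan cyc_dist_sum) simp
  also have "\<dots> = 6 * tail_transmission c t m + 90 * m"
    by (simp add: tail_transmission_def sum.distrib sum_distrib_left)
  finally show ?thesis by simp
qed

lemma gt_Suc:
  assumes "pc_valid n c t" "Suc m < n"
  shows "gt c t (Suc m) = 9 + 6 * m * (1 + cyc_dist (c m) (t (Suc m)))"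
proof (cases "m = 0")
  case False
  have positions: "c m < 6" "t (Suc m) < 6" "c m \<noteq> t (Suc m)"
    using assms False unfolding pc_valid_def by (auto dest: spec[of _ "Suc m"])
  then have "cyc_dist (c m) (t (Suc m)) = hex_dist (c m) (t (Suc m))"
    by (simp add: cyc_dist_eq_hex_dist)
  moreover have "hex_dist (c m) (t (Suc m)) \<in> {1, 2, 3}"
    using hex_dist_cases[OF positions] .
  ultimately show ?thesis
    using False by (auto simp: gt_def is_ortho_def is_meta_def is_para_def)
qed (simp add: gt_def)

lemma tail_transmission_eq_sum_gt:
  assumes "pc_valid n c t" "m < n"
  shows "tail_transmission c t m = (\<Sum>i = 1..m. gt c t i)"
  using assms(2)
proof (induction m)
  case 0
  then show ?case by (simp add: tail_transmission_def)
next
  case (Suc m)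
  then show ?case
    using tail_transmission_Suc[of c t m] gt_Suc[OF assms(1) Suc.prems] by simp
qed

lemma dist_sum_eq:
  assumes "pc_valid n c t" "m \<le> n"
  shows "dist_sum c t m + 36 * m = 12 * (\<Sum>k = 1..m - 1. \<Sum>i = 1..k. gt c t i) + 90 * m\<^sup>2"
  using assms(2)
proof (induction m)
  case 0
  then show ?case by (simp add: dist_sum_def)
next
  case (Suc m)
  have "(\<Sum>k = 1..Suc m - 1. \<Sum>i = 1..k. gt c t i)
          = (\<Sum>k = 1..m - 1. \<Sum>i = 1..k. gt c t i) + tail_transmission c t m"
    using Suc.prems tail_transmission_eq_sum_gt[OF assms(1), of m] by (cases m) auto
  then show ?case
    using Suc dist_sum_Suc[of c t m] by (simp add: power2_eq_square algebra_simps)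
qed

lemma sum_partial_sums:
  "(\<Sum>k = 1..m. \<Sum>i = 1..k. f i) = (\<Sum>k = 1..m. (Suc m - k) * (f k :: nat))"
proof (induction m)
  case 0
  then show ?case by simp
next
  case (Suc m)
  have "(\<Sum>k = 1..m. (Suc (Suc m) - k) * f k) = (\<Sum>k = 1..m. (Suc m - k) * f k + f k)"
    by (rule sum.cong) (auto simp: Suc_diff_le)
  then show ?case using Suc by (simp add: sum.distrib)
qed

theorem theorem3p2:
  fixes n :: nat and c t :: "nat \<Rightarrow> nat"
  assumes "n \<ge> 1" and "pc_valid n c t"
  shows "wiener (pc_verts n) (pc_edge n c t)
           = 6 * (\<Sum>k = 1..n - 1. \<Sum>i = 1..k. gt c t i) + 45 * n\<^sup>2 - 18 * n
       \<and> 6 * (\<Sum>k = 1..n - 1. \<Sum>i = 1..k. gt c t i) + 45 * n\<^sup>2 - 18 * n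
           = 6 * (\<Sum>k = 1..n - 1. (n - k) * gt c t k) + 45 * n\<^sup>2 - 18 * n"
proof -
  let ?Q = "\<Sum>k = 1..n - 1. \<Sum>i = 1..k. gt c t i"
  have "dist_sum c t n + 36 * n = 12 * ?Q + 90 * n\<^sup>2"
    using dist_sum_eq[OF assms(2) order_refl] .
  moreover have "n \<le> n\<^sup>2"
    by (simp add: power2_eq_square)
  ultimately have "dist_sum c t n = 2 * (6 * ?Q + 45 * n\<^sup>2 - 18 * n)"
    by linarith
  then have "wiener (pc_verts n) (pc_edge n c t) = 6 * ?Q + 45 * n\<^sup>2 - 18 * n"
    by (simp add: wiener_eq_dist_sum[OF assms(2)])
  moreover have "?Q = (\<Sum>k = 1..n - 1. (n - k) * gt c t k)"
    using sum_partial_sums[where m = "n - 1" and f = "gt c t"] assms(1) by simp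
  ultimately show ?thesis by simp
qed

end
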